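(* For $p\in\mathbb{R}^d\setminus\{0\}$, the solution $u_p$ satisfies $$\max\{0,p\cdot x\}\le u_p(x)\le \max\{0,p\cdot x\}+\|p\|_\infty\quad\text{for all }x\in\mathbb{Z}^d,$$ and $\Delta u_p(x)\le \Delta u_p(0)\,\mathbf 1_{\{u_p=0\}}(x)$ for all $x\in\mathbb{Z}^d$.
   Context: Discrete Laplacian on $\mathbb{Z}^d$: $\Delta u(x)=\sum_{i=1}^d(u(x+e_i)+u(x-e_i)-2u(x))$. For $p\ne0$, $u_p:\mathbb{Z}^d\to\mathbb{R}$ is the unique solution of $\Delta u=0$ on $\{p\cdot x>0\}$, $u=0$ on $\{p\cdot x\le0\}$, $\sup_{p\cdot x>0}|u(x)-p\cdot x|<\infty$. $\|p\|_\infty=\max_k|p_k|$. *)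

theory Defs
  imports "HOL-Analysis.Analysis"
begin

text \<open>Points of Z^d are int^'d (d = CARD('d), arbitrary finite index type);
  directions p are real^'d.\<close>

definition dot :: "real ^ 'd \<Rightarrow> int ^ 'd \<Rightarrow> real" where
  "dot p x = (\<Sum>i\<in>UNIV. p $ i * real_of_int (x $ i))"

definition unitvec :: "'d \<Rightarrow> int ^ 'd" where
  "unitvec i = axis i 1"

definition dlap :: "(int ^ 'd \<Rightarrow> real) \<Rightarrow> int ^ 'd \<Rightarrow> real" where
  "dlap u x = (\<Sum>i\<in>UNIV. u (x + unitvec i) + u (x - unitvec i) - 2 * u x)"

definition supnorm :: "real ^ 'd \<Rightarrow> real" where
  "supnorm p = Max (range (\<lambda>i. \<bar>p $ i\<bar>))"

definition is_up :: "real ^ 'd \<Rightarrow> (int ^ 'd \<Rightarrow> real) \<Rightarrow> bool" where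
  "is_up p u \<longleftrightarrow>
     (\<forall>x. dot p x > 0 \<longrightarrow> dlap u x = 0) \<and>
     (\<forall>x. dot p x \<le> 0 \<longrightarrow> u x = 0) \<and>
     (\<exists>C. \<forall>x. dot p x > 0 \<longrightarrow> \<bar>u x - dot p x\<bar> \<le> C)"

definition up :: "real ^ 'd \<Rightarrow> int ^ 'd \<Rightarrow> real" where
  "up p = (THE u. is_up p u)"

end

theory Submission
  imports Defs
begin

text \<open>Perron's method: the pointwise infimum of all functions that vanish on p \<cdot> x \<le> 0 and
  are superharmonic and squeezed between p \<cdot> x and p \<cdot> x + |p|_\<infinity> on p \<cdot> x > 0 is again such a
  function, and it is harmonic on the half-space, so it solves the exterior problem with the
  stated bounds. A maximum principle for bounded-above subharmonic functions on the half-space,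
  using that solution itself as a barrier, shows that it is the only solution and that it
  decreases under translations by t with p \<cdot> t \<le> 0. Hence for x outside the half-space each
  neighbour value u(x \<plusminus> e_i) is at most u(\<plusminus> e_i), which is the Laplacian inequality.\<close>

definition neighbour_sum :: "(int ^ 'd \<Rightarrow> real) \<Rightarrow> int ^ 'd \<Rightarrow> real" where
  "neighbour_sum u x = (\<Sum>i\<in>UNIV. u (x + unitvec i) + u (x - unitvec i))"

lemma dot_add: "dot p (x + y) = dot p x + dot p y"
  unfolding dot_def by (simp add: sum.distrib algebra_simps)

lemma dot_diff: "dot p (x - y) = dot p x - dot p y"
  unfolding dot_def by (simp add: sum_subtractf algebra_simps)

lemma dot_unitvec: "dot p (unitvec i) = p $ i"
  unfolding dot_def unitvec_def axis_def by (simp add: if_distrib cong: if_cong)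

lemma dot_0 [simp]: "dot p 0 = 0"
  unfolding dot_def by simp

lemma unitvec_neq_0: "unitvec i \<noteq> 0"
  unfolding unitvec_def by (simp add: axis_eq_0_iff)

lemma abs_le_supnorm: "\<bar>p $ i\<bar> \<le> supnorm p"
  unfolding supnorm_def by (rule Max_ge) auto

lemma supnorm_nonneg: "0 \<le> supnorm p"
  using abs_le_supnorm[of p] abs_ge_zero order_trans by blast

lemma descending_neighbour:
  assumes "p $ k \<noteq> 0"
  obtains y where "y = z + unitvec k \<or> y = z - unitvec k" "dot p y = dot p z - \<bar>p $ k\<bar>"
proof (cases "p $ k > 0")
  case True
  then show ?thesis by (intro that[of "z - unitvec k"]) (auto simp: dot_diff dot_unitvec)
next
  case False
  then show ?thesis using assms
    by (intro that[of "z + unitvec k"]) (auto simp: dot_add dot_unitvec)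
qed

lemma dlap_eq_neighbour_sum:
  "dlap u x = neighbour_sum u x - 2 * real CARD('d) * u x" for u :: "int ^ 'd \<Rightarrow> real"
  unfolding dlap_def neighbour_sum_def by (simp add: sum_subtractf)

lemma neighbour_sum_mono: "(\<And>z. u z \<le> v z) \<Longrightarrow> neighbour_sum u x \<le> neighbour_sum v x"
  unfolding neighbour_sum_def by (intro sum_mono add_mono) auto

lemma neighbour_sum_translate: "neighbour_sum u (x + t) = neighbour_sum (\<lambda>z. u (z + t)) x"
  unfolding neighbour_sum_def by (simp add: algebra_simps)

lemma dlap_diff: "dlap (\<lambda>z. u z - v z) x = dlap u x - dlap v x"
  unfolding dlap_def sum_subtractf[symmetric] by (rule sum.cong) (simp_all add: algebra_simps)

lemma dlap_cmult: "dlap (\<lambda>z. c * u z) x = c * dlap u x"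
  unfolding dlap_def by (simp add: sum_distrib_left algebra_simps)

lemma dlap_translate: "dlap (\<lambda>z. u (z + t)) x = dlap u (x + t)"
  unfolding dlap_def by (simp add: algebra_simps)

lemma dlap_dot: "dlap (dot p) x = 0"
  unfolding dlap_def by (simp add: dot_add dot_diff)

lemma neighbour_sum_le_via_neighbour:
  fixes v :: "int ^ 'd \<Rightarrow> real"
  assumes "\<And>z. v z \<le> S" and "y = x + unitvec k \<or> y = x - unitvec k"
  shows "neighbour_sum v x \<le> (2 * real CARD('d) - 1) * S + v y"
proof -
  let ?T = "\<lambda>i. v (x + unitvec i) + v (x - unitvec i)"
  have "neighbour_sum v x = ?T k + sum ?T (UNIV - {k})"
    unfolding neighbour_sum_def by (simp add: sum.remove)
  moreover have "?T k \<le> S + v y"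
    using assms by (auto intro: add_mono)
  moreover have "sum ?T (UNIV - {k}) \<le> (\<Sum>i\<in>UNIV - {k}. 2 * S)"
    using assms(1) by (intro sum_mono) (smt (verit))
  moreover have "(\<Sum>i\<in>UNIV - {k::'d}. 2 * S) = (real CARD('d) - 1) * (2 * S)"
    by (simp add: card_Diff_singleton of_nat_diff)
  ultimately show ?thesis by (simp add: algebra_simps)
qed

text \<open>Each layer of width |p_k| lowers the bound S by the factor 1 - 1/(2d): the neighbour in
  direction \<plusminus>e_k lies one layer further down.\<close>

lemma subharmonic_layer_bound:
  fixes w :: "int ^ 'd \<Rightarrow> real"
  assumes k: "p $ k \<noteq> 0"
    and sub: "\<And>z. dot p z > c \<Longrightarrow> dlap w z \<ge> 0"
    and below: "\<And>z. dot p z \<le> c \<Longrightarrow> w z \<le> 0"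
    and le_S: "\<And>z. w z \<le> S" and "S \<ge> 0"
  shows "dot p z \<le> c + real N * \<bar>p $ k\<bar> \<Longrightarrow> w z \<le> S * (1 - (1 / (2 * real CARD('d))) ^ N)"
proof (induction N arbitrary: z)
  case 0
  then show ?case using below by simp
next
  case (Suc N)
  define n where "n = real CARD('d)"
  have n: "n \<ge> 1" unfolding n_def by simp
  have "(1 / (2 * n)) ^ Suc N \<le> 1"
    using n by (intro power_le_one) auto
  then have nonneg: "0 \<le> S * (1 - (1 / (2 * n)) ^ Suc N)"
    using \<open>S \<ge> 0\<close> by simp
  show ?case
  proof (cases "dot p z \<le> c")
    case True
    then show ?thesis using below[of z] nonneg unfolding n_def by linarith
  next
    case False
    obtain y where y: "y = z + unitvec k \<or> y = z - unitvec k" "dot p y = dot p z - \<bar>p $ k\<bar>"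
      using descending_neighbour[OF k] .
    have "w y \<le> S * (1 - (1 / (2 * n)) ^ N)"
      using Suc y(2) unfolding n_def by (intro Suc.IH) (simp add: algebra_simps)
    moreover have "2 * n * w z \<le> neighbour_sum w z"
      using sub[of z] False unfolding dlap_eq_neighbour_sum n_def by simp
    moreover have "neighbour_sum w z \<le> (2 * n - 1) * S + w y"
      unfolding n_def using le_S y(1) by (rule neighbour_sum_le_via_neighbour)
    ultimately have "2 * n * w z \<le> 2 * n * S - S * (1 / (2 * n)) ^ N"
      by (simp add: algebra_simps)
    then show ?thesis
      using n unfolding n_def[symmetric] by (simp add: field_simps)
  qed
qed

lemma slab_maximum_principle:
  fixes p :: "real ^ 'd" and w :: "int ^ 'd \<Rightarrow> real"
  assumes "p \<noteq> 0"
    and sub: "\<And>z. dot p z > c \<Longrightarrow> dlap w z \<ge> 0"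
    and below: "\<And>z. dot p z \<le> c \<Longrightarrow> w z \<le> 0"
    and above: "\<And>z. dot p z > R \<Longrightarrow> w z \<le> 0"
    and bounded: "\<And>z. w z \<le> M"
  shows "w x \<le> 0"
proof (rule ccontr)
  assume "\<not> w x \<le> 0"
  obtain k where k: "p $ k \<noteq> 0"
    using \<open>p \<noteq> 0\<close> by (metis vec_eq_iff zero_index)
  define S where "S = Sup (range w)"
  have le_S: "w z \<le> S" for z
    unfolding S_def using bounded by (meson bdd_aboveI2 cSUP_upper UNIV_I)
  with \<open>\<not> w x \<le> 0\<close> have "S > 0" by (meson le_less_trans not_le)
  define \<theta> where "\<theta> = (1 / (2 * real CARD('d))) ^ nat \<lceil>(R - c) / \<bar>p $ k\<bar>\<rceil>"
  have "\<theta> > 0" unfolding \<theta>_def by simp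
  have "w z \<le> S * (1 - \<theta>)" for z
  proof (cases "dot p z > R")
    case True
    moreover have "real CARD('d) \<ge> 1" by simp
    then have "1 \<le> 2 * real CARD('d)" by linarith
    then have "\<theta> \<le> 1" unfolding \<theta>_def by (intro power_le_one) auto
    ultimately show ?thesis
      using above[of z] \<open>S > 0\<close> by (smt (verit) mult_nonneg_nonneg)
  next
    case False
    have "(R - c) / \<bar>p $ k\<bar> \<le> real (nat \<lceil>(R - c) / \<bar>p $ k\<bar>\<rceil>)" by linarith
    then have "dot p z \<le> c + real (nat \<lceil>(R - c) / \<bar>p $ k\<bar>\<rceil>) * \<bar>p $ k\<bar>"
      using False k by (simp add: divide_le_eq algebra_simps)
    then show ?thesis unfolding \<theta>_def
      using subharmonic_layer_bound[OF k sub below le_S] \<open>S > 0\<close> by simp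
  qed
  then have "S \<le> S * (1 - \<theta>)"
    unfolding S_def by (intro cSUP_least) auto
  with \<open>S > 0\<close> \<open>\<theta> > 0\<close> show False by (simp add: algebra_simps mult_le_0_iff)
qed

text \<open>Phragmen-Lindelof: subtracting \<epsilon> B from w pushes it below 0 far out in the
  half-space, and letting \<epsilon> \<rightarrow> 0 at a fixed point gives the claim.\<close>

lemma halfspace_maximum_principle:
  fixes p :: "real ^ 'd" and w B :: "int ^ 'd \<Rightarrow> real"
  assumes "p \<noteq> 0"
    and B_nonneg: "\<And>z. B z \<ge> 0"
    and B_ge: "\<And>z. dot p z > c \<Longrightarrow> dot p z - c \<le> B z"
    and B_super: "\<And>z. dot p z > c \<Longrightarrow> dlap B z \<le> 0"
    and sub: "\<And>z. dot p z > c \<Longrightarrow> dlap w z \<ge> 0"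
    and below: "\<And>z. dot p z \<le> c \<Longrightarrow> w z \<le> 0"
    and bounded: "\<And>z. w z \<le> M"
  shows "w x \<le> 0"
proof (rule ccontr)
  assume "\<not> w x \<le> 0"
  define \<epsilon> where "\<epsilon> = w x / (B x + 1)"
  have "\<epsilon> > 0" using \<open>\<not> w x \<le> 0\<close> B_nonneg[of x] unfolding \<epsilon>_def by simp
  have "M \<ge> 0" using bounded[of x] \<open>\<not> w x \<le> 0\<close> by simp
  have "w x - \<epsilon> * B x \<le> 0"
  proof (rule slab_maximum_principle[OF \<open>p \<noteq> 0\<close>, where c = c and R = "c + M / \<epsilon>" and M = M])
    fix z
    show "dot p z > c \<Longrightarrow> 0 \<le> dlap (\<lambda>z. w z - \<epsilon> * B z) z"
      using sub[of z] B_super[of z] mult_nonneg_nonpos[of \<epsilon> "dlap B z"] \<open>\<epsilon> > 0\<close>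
      by (simp add: dlap_diff dlap_cmult)
    show "dot p z \<le> c \<Longrightarrow> w z - \<epsilon> * B z \<le> 0"
      using below[of z] B_nonneg[of z] \<open>\<epsilon> > 0\<close> by (smt (verit) mult_nonneg_nonneg)
    show "w z - \<epsilon> * B z \<le> M"
      using bounded[of z] B_nonneg[of z] \<open>\<epsilon> > 0\<close> by (smt (verit) mult_nonneg_nonneg)
    assume far: "dot p z > c + M / \<epsilon>"
    then have "M < \<epsilon> * (dot p z - c)" using \<open>\<epsilon> > 0\<close> by (simp add: field_simps)
    also have "\<dots> \<le> \<epsilon> * B z"
      using B_ge[of z] far divide_nonneg_pos[OF \<open>M \<ge> 0\<close> \<open>\<epsilon> > 0\<close>] \<open>\<epsilon> > 0\<close>
      by (intro mult_left_mono) auto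
    finally show "w z - \<epsilon> * B z \<le> 0" using bounded[of z] by simp
  qed
  then have "w x \<le> w x * B x / (B x + 1)" unfolding \<epsilon>_def by simp
  also have "\<dots> < w x" using \<open>\<not> w x \<le> 0\<close> B_nonneg[of x] by (simp add: field_simps)
  finally show False by simp
qed

definition exterior_supersolutions :: "real ^ 'd \<Rightarrow> (int ^ 'd \<Rightarrow> real) set" where
  "exterior_supersolutions p = {v.
     (\<forall>x. dot p x \<le> 0 \<longrightarrow> v x = 0) \<and>
     (\<forall>x. dot p x > 0 \<longrightarrow> dot p x \<le> v x \<and> v x \<le> dot p x + supnorm p \<and> dlap v x \<le> 0)}"

definition perron :: "real ^ 'd \<Rightarrow> int ^ 'd \<Rightarrow> real" where
  "perron p x = (INF v\<in>exterior_supersolutions p. v x)"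

lemma exterior_supersolution_lower_bound:
  "v \<in> exterior_supersolutions p \<Longrightarrow> max 0 (dot p x) \<le> v x"
  unfolding exterior_supersolutions_def by (cases "dot p x > 0") auto

lemma exterior_supersolution_upper_bound:
  "v \<in> exterior_supersolutions p \<Longrightarrow> v x \<le> max 0 (dot p x) + supnorm p"
  unfolding exterior_supersolutions_def using supnorm_nonneg[of p]
  by (cases "dot p x > 0") auto

lemma exterior_supersolutions_nonempty: "exterior_supersolutions p \<noteq> {}"
proof -
  define v where "v = (\<lambda>x. if dot p x > 0 then dot p x + supnorm p else 0)"
  have "dlap v x \<le> 0" if "dot p x > 0" for x
  proof -
    have "v y \<le> dot p y + supnorm p" if "y = x + unitvec i \<or> y = x - unitvec i" for y i
      using that \<open>dot p x > 0\<close> abs_le_supnorm[of p i]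
      unfolding v_def by (auto simp: dot_add dot_diff dot_unitvec)
    then have "neighbour_sum v x \<le> neighbour_sum (\<lambda>y. dot p y + supnorm p) x"
      unfolding neighbour_sum_def by (intro sum_mono add_mono) auto
    then show ?thesis
      using that unfolding dlap_eq_neighbour_sum neighbour_sum_def v_def
      by (simp add: dot_add dot_diff sum.distrib algebra_simps)
  qed
  then have "v \<in> exterior_supersolutions p"
    unfolding exterior_supersolutions_def using supnorm_nonneg[of p] by (auto simp: v_def)
  then show ?thesis by blast
qed

lemma perron_le: "v \<in> exterior_supersolutions p \<Longrightarrow> perron p x \<le> v x"
  unfolding perron_def
  by (rule cINF_lower) (auto intro: bdd_belowI2 exterior_supersolution_lower_bound)

lemma le_perron:
  "(\<And>v. v \<in> exterior_supersolutions p \<Longrightarrow> a \<le> v x) \<Longrightarrow> a \<le> perron p x"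
  unfolding perron_def by (rule cINF_greatest[OF exterior_supersolutions_nonempty])

lemma perron_in_exterior_supersolutions:
  fixes p :: "real ^ 'd"
  shows "perron p \<in> exterior_supersolutions p"
proof -
  obtain v where v: "v \<in> exterior_supersolutions p"
    using exterior_supersolutions_nonempty by blast
  have outside: "perron p x = 0" if "dot p x \<le> 0" for x
  proof (rule antisym)
    show "perron p x \<le> 0"
      using perron_le[OF v, of x] v that unfolding exterior_supersolutions_def by auto
    show "0 \<le> perron p x"
      using exterior_supersolution_lower_bound by (fastforce intro: le_perron)
  qed
  have super: "dlap (perron p) x \<le> 0" if "dot p x > 0" for x
  proof -
    have "2 * real CARD('d) * v x \<ge> neighbour_sum (perron p) x"
      if "v \<in> exterior_supersolutions p" for v
      using \<open>dot p x > 0\<close> that neighbour_sum_mono[of "perron p" v x] perron_le[OF that]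
      unfolding exterior_supersolutions_def dlap_eq_neighbour_sum by fastforce
    then have "neighbour_sum (perron p) x / (2 * real CARD('d)) \<le> perron p x"
      by (intro le_perron) (simp add: field_simps)
    then show ?thesis unfolding dlap_eq_neighbour_sum by (simp add: field_simps)
  qed
  have lower: "max 0 (dot p x) \<le> perron p x" for x
    by (rule le_perron) (rule exterior_supersolution_lower_bound)
  have upper: "perron p x \<le> max 0 (dot p x) + supnorm p" for x
    using perron_le[OF v] exterior_supersolution_upper_bound[OF v] by (rule order_trans)
  show ?thesis
    unfolding exterior_supersolutions_def
  proof (intro CollectI conjI allI impI)
    fix x assume "dot p x > 0"
    then show "dot p x \<le> perron p x" "perron p x \<le> dot p x + supnorm p" "dlap (perron p) x \<le> 0"
      using lower[of x] upper[of x] super by auto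
  qed (rule outside)
qed

lemma neighbour_sum_fun_upd: "neighbour_sum (u(x := a)) x = neighbour_sum u x"
  unfolding neighbour_sum_def using unitvec_neq_0
  by (intro sum.cong refl) (auto simp: algebra_simps)

lemma neighbour_sum_dot: "neighbour_sum (dot p) x = 2 * real CARD('d) * dot p x"
  for p :: "real ^ 'd"
  using dlap_dot[of p x] unfolding dlap_eq_neighbour_sum by simp

text \<open>If the infimum were strictly superharmonic at x, lowering it at x alone to the mean of its
  neighbours would give a smaller element of the family.\<close>

lemma perron_harmonic:
  fixes p :: "real ^ 'd"
  assumes "dot p x > 0"
  shows "dlap (perron p) x = 0"
proof (rule ccontr)
  let ?u = "perron p" and ?n = "2 * real CARD('d)"
  have u: "?u \<in> exterior_supersolutions p"
    by (rule perron_in_exterior_supersolutions)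
  assume "dlap ?u x \<noteq> 0"
  with u assms have "neighbour_sum ?u x < ?n * ?u x"
    unfolding exterior_supersolutions_def dlap_eq_neighbour_sum by fastforce
  define A where "A = neighbour_sum ?u x / ?n"
  have "A < ?u x"
    using \<open>neighbour_sum ?u x < ?n * ?u x\<close> unfolding A_def by (simp add: field_simps)
  have "dot p x \<le> A"
  proof -
    have "neighbour_sum (dot p) x \<le> neighbour_sum ?u x"
      using exterior_supersolution_lower_bound[OF u]
      by (intro neighbour_sum_mono) (meson max.boundedE)
    then show ?thesis unfolding A_def neighbour_sum_dot by (simp add: field_simps)
  qed
  define v where "v = ?u(x := A)"
  have v_le: "v z \<le> ?u z" for z
    using \<open>A < ?u x\<close> unfolding v_def by simp
  have "v \<in> exterior_supersolutions p"
    unfolding exterior_supersolutions_def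
  proof (intro CollectI conjI allI impI)
    fix z assume "dot p z \<le> 0"
    then show "v z = 0" using u assms unfolding v_def exterior_supersolutions_def by auto
  next
    fix z assume z: "dot p z > 0"
    show "dot p z \<le> v z" "v z \<le> dot p z + supnorm p"
      using u z \<open>dot p x \<le> A\<close> \<open>A < ?u x\<close>
      unfolding v_def exterior_supersolutions_def by auto
    show "dlap v z \<le> 0"
    proof (cases "z = x")
      case True
      then show ?thesis
        unfolding dlap_eq_neighbour_sum v_def A_def by (simp add: neighbour_sum_fun_upd)
    next
      case False
      have "neighbour_sum v z \<le> neighbour_sum ?u z"
        by (rule neighbour_sum_mono) (rule v_le)
      then show ?thesis
        using u z False unfolding dlap_eq_neighbour_sum exterior_supersolutions_def v_def
        by fastforce
    qed
  qed
  then have "?u x \<le> A" using perron_le[of v p x] by (simp add: v_def)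
  with \<open>A < ?u x\<close> show False by simp
qed

lemma perron_is_up: "is_up p (perron p)"
  for p :: "real ^ 'd"
  using perron_in_exterior_supersolutions[of p] perron_harmonic[of p]
  unfolding is_up_def exterior_supersolutions_def by (intro conjI exI[of _ "supnorm p"]) auto

text \<open>The solution just constructed serves as the barrier, which requires c \<ge> 0.\<close>

lemma exterior_maximum_principle:
  fixes p :: "real ^ 'd" and w :: "int ^ 'd \<Rightarrow> real"
  assumes "p \<noteq> 0" and "c \<ge> 0"
    and sub: "\<And>z. dot p z > c \<Longrightarrow> dlap w z \<ge> 0"
    and below: "\<And>z. dot p z \<le> c \<Longrightarrow> w z \<le> 0"
    and bounded: "\<And>z. w z \<le> M"
  shows "w x \<le> 0"
proof (rule halfspace_maximum_principle[OF \<open>p \<noteq> 0\<close> _ _ _ sub below bounded])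
  fix z
  have "max 0 (dot p z) \<le> perron p z"
    by (rule exterior_supersolution_lower_bound[OF perron_in_exterior_supersolutions])
  then show "0 \<le> perron p z" "dot p z > c \<Longrightarrow> dot p z - c \<le> perron p z"
    using \<open>c \<ge> 0\<close> by auto
  show "dot p z > c \<Longrightarrow> dlap (perron p) z \<le> 0"
    using \<open>c \<ge> 0\<close> perron_harmonic[of p z] by simp
qed

lemma is_up_imp_eq_perron:
  fixes p :: "real ^ 'd"
  assumes "p \<noteq> 0" and "is_up p u"
  shows "u = perron p"
proof -
  obtain C where harmonic: "\<And>z. dot p z > 0 \<Longrightarrow> dlap u z = 0"
    and outside: "\<And>z. dot p z \<le> 0 \<Longrightarrow> u z = 0"
    and close: "\<And>z. dot p z > 0 \<Longrightarrow> \<bar>u z - dot p z\<bar> \<le> C"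
    using \<open>is_up p u\<close> unfolding is_up_def by blast
  have perron: "perron p \<in> exterior_supersolutions p"
    by (rule perron_in_exterior_supersolutions)
  have bounded: "\<bar>u z - perron p z\<bar> \<le> \<bar>C\<bar> + supnorm p" for z
    using perron outside[of z] close[of z] supnorm_nonneg[of p]
    unfolding exterior_supersolutions_def by (cases "dot p z > 0") auto
  have "u z - perron p z \<le> 0" for z
  proof (rule exterior_maximum_principle[OF \<open>p \<noteq> 0\<close> order_refl])
    show "dot p y \<le> 0 \<Longrightarrow> u y - perron p y \<le> 0" for y
      using perron outside[of y] unfolding exterior_supersolutions_def by simp
  qed (use bounded harmonic perron_harmonic[of p] in \<open>auto simp: dlap_diff abs_le_iff\<close>)
  moreover have "perron p z - u z \<le> 0" for z
  proof (rule exterior_maximum_principle[OF \<open>p \<noteq> 0\<close> order_refl])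
    show "dot p y \<le> 0 \<Longrightarrow> perron p y - u y \<le> 0" for y
      using perron outside[of y] unfolding exterior_supersolutions_def by simp
  qed (use bounded harmonic perron_harmonic[of p] in \<open>auto simp: dlap_diff abs_le_iff\<close>)
  ultimately show ?thesis by (intro ext antisym) auto
qed

lemma up_eq_perron:
  fixes p :: "real ^ 'd"
  assumes "p \<noteq> 0"
  shows "up p = perron p"
  unfolding up_def by (rule the_equality) (auto intro: perron_is_up is_up_imp_eq_perron[OF assms])

lemma perron_translate_le:
  fixes p :: "real ^ 'd"
  assumes "p \<noteq> 0" and "dot p t \<le> 0"
  shows "perron p (x + t) \<le> perron p x"
proof -
  have perron: "perron p \<in> exterior_supersolutions p"
    by (rule perron_in_exterior_supersolutions)
  have "perron p (x + t) - perron p x \<le> 0"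
  proof (rule exterior_maximum_principle[OF \<open>p \<noteq> 0\<close>, where c = "- dot p t"])
    fix z
    show "dot p z > - dot p t \<Longrightarrow> 0 \<le> dlap (\<lambda>z. perron p (z + t) - perron p z) z"
      using \<open>dot p t \<le> 0\<close> perron_harmonic[of p z] perron_harmonic[of p "z + t"]
      by (simp add: dlap_diff dlap_translate dot_add)
    show "dot p z \<le> - dot p t \<Longrightarrow> perron p (z + t) - perron p z \<le> 0"
      using perron exterior_supersolution_lower_bound[OF perron, of z]
      unfolding exterior_supersolutions_def by (simp add: dot_add)
    show "perron p (z + t) - perron p z \<le> supnorm p"
      using exterior_supersolution_upper_bound[OF perron, of "z + t"]
        exterior_supersolution_lower_bound[OF perron, of z] \<open>dot p t \<le> 0\<close>
      by (simp add: dot_add max_def split: if_splits)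
  qed (use \<open>dot p t \<le> 0\<close> in simp)
  then show ?thesis by simp
qed

lemma dlap_perron_le_dlap_perron_0:
  fixes p :: "real ^ 'd"
  assumes "p \<noteq> 0" and "dot p x \<le> 0"
  shows "dlap (perron p) x \<le> dlap (perron p) 0"
proof -
  have perron: "perron p \<in> exterior_supersolutions p"
    by (rule perron_in_exterior_supersolutions)
  have "neighbour_sum (perron p) x = neighbour_sum (\<lambda>z. perron p (z + x)) 0"
    using neighbour_sum_translate[of "perron p" 0 x] by simp
  also have "\<dots> \<le> neighbour_sum (perron p) 0"
    using perron_translate_le[OF assms] by (rule neighbour_sum_mono)
  finally show ?thesis
    using perron assms unfolding dlap_eq_neighbour_sum exterior_supersolutions_def by simp
qed

theorem mainTheorem5:
  fixes p :: "real ^ 'd"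
  assumes "p \<noteq> 0"
  shows "(\<forall>x. max 0 (dot p x) \<le> up p x \<and> up p x \<le> max 0 (dot p x) + supnorm p) \<and>
         (\<forall>x. dlap (up p) x \<le> dlap (up p) 0 * (if up p x = 0 then 1 else 0))"
proof -
  have perron: "perron p \<in> exterior_supersolutions p"
    by (rule perron_in_exterior_supersolutions)
  have "dlap (perron p) x \<le> dlap (perron p) 0 * (if perron p x = 0 then 1 else 0)" for x
  proof (cases "dot p x > 0")
    case True
    then have "perron p x \<noteq> 0"
      using exterior_supersolution_lower_bound[OF perron, of x] by auto
    with True show ?thesis using perron_harmonic[of p x] by simp
  next
    case False
    then show ?thesis
      using perron dlap_perron_le_dlap_perron_0[OF assms, of x]
      unfolding exterior_supersolutions_def by simp
  qed
  then show ?thesis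
    unfolding up_eq_perron[OF assms]
    using exterior_supersolution_lower_bound[OF perron]
      exterior_supersolution_upper_bound[OF perron] by blast
qed

end
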